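(* Let $B_1,B_2$ be compact curves of genus at least two, $g$ the genus of $B_2$, and let $\mathcal A=(D_1\cup\dots\cup D_{m+1},d,\{(t_i,r_i,n_i)\}_{i=1}^{m+1})$ be a simple Galois admissible configuration for $B_1\times B_2$ with $m\le4(g-1)$. Let $\mathcal A'=(D_1\cup\dots\cup D_m,d,\{(t_i,r_i,n_i)\}_{i=1}^{m})$ be obtained by omitting the last component. Then $\nu(\mathcal A')<\nu(\mathcal A)$.
   Context: A simple Galois admissible configuration for $B_1\times B_2$ consists of: pairwise disjoint curves $D_1,\dots,D_k\subset B_1\times B_2$, each the graph of an étale map $B_1\to B_2$; a positive integer $d$; and for each $i$ positive integers $t_i,n_i$ and $r_i\ge2$ with $d=t_in_ir_i$. Its abstract slope is $$\nu(\mathcal A)=2+\frac{-\sum_{i=1}^k t_in_i\frac{(r_i-1)(r_i+1)}{r_i}e(D_i)}{d\,e(B_1\times B_2)-\sum_{i=1}^k t_in_i(r_i-1)e(D_i)},$$ where $e$ denotes topological Euler characteristic; equivalently $\nu(\mathcal A)=2+\dfrac{1-\frac1k\sum_i r_i^{-2}}{\frac{2g-2}{k}+1-\frac1k\sum_i r_i^{-1}}$ with $g$ the genus of $B_2$. *)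

theory Defs
  imports Complex_Main
begin

definition euler_curve :: "nat \<Rightarrow> real" where
  "euler_curve g = 2 - 2 * real g"

text \<open>Numerical data of a simple Galois admissible configuration for B1 x B2,
  where B1, B2 have genera g1, g2: components D_0, ..., D_(k-1), each the graph of an
  etale map B1 -> B2 (hence isomorphic to B1, so e(D_i) = e(B1)), and
  e(B1 x B2) = e(B1) e(B2).\<close>
definition sga_config ::
  "nat \<Rightarrow> nat \<Rightarrow> nat \<Rightarrow> nat \<Rightarrow> (nat \<Rightarrow> nat) \<Rightarrow> (nat \<Rightarrow> nat) \<Rightarrow> (nat \<Rightarrow> nat) \<Rightarrow> bool" where
  "sga_config g1 g2 k d t n r \<longleftrightarrow>
     d > 0 \<and>
     (\<forall>i<k. t i > 0 \<and> n i > 0 \<and> r i \<ge> 2 \<and> d = t i * n i * r i) \<and>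
     (k > 0 \<longrightarrow> (\<exists>\<delta>::nat. \<delta> > 0 \<and> real g1 - 1 = real \<delta> * (real g2 - 1)))"

text \<open>Abstract slope nu(A), with e(D_i) = e(B1) and e(B1 x B2) = e(B1) e(B2).\<close>
definition abstract_slope ::
  "nat \<Rightarrow> nat \<Rightarrow> nat \<Rightarrow> nat \<Rightarrow> (nat \<Rightarrow> nat) \<Rightarrow> (nat \<Rightarrow> nat) \<Rightarrow> (nat \<Rightarrow> nat) \<Rightarrow> real" where
  "abstract_slope g1 g2 k d t n r =
     2 + (- (\<Sum>i<k. real (t i) * real (n i)
                     * ((real (r i) - 1) * (real (r i) + 1) / real (r i)) * euler_curve g1))
       / (real d * (euler_curve g1 * euler_curve g2)
          - (\<Sum>i<k. real (t i) * real (n i) * (real (r i) - 1) * euler_curve g1))"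

end

theory Submission
  imports Defs
begin

text \<open>Since e(B1) < 0 cancels, the slope is 2 + A/(G + B) with A = \<Sum> t n (r^2 - 1)/r,
  B = \<Sum> t n (r - 1) and G = d(2g - 2) > 0. A new component adds a to A and b to B with
  0 < b \<le> a, so the slope grows as soon as A < G + B. Each component contributes
  a - b = d (r - 1)/r^2 \<le> d/4 to A - B, hence A - B \<le> m d/4 \<le> (g - 1) d < G.\<close>

lemma abstract_slope_eq:
  fixes g1 g2 k d :: nat and t n r :: "nat \<Rightarrow> nat"
  assumes "g1 \<ge> 2"
  shows "abstract_slope g1 g2 k d t n r =
    2 + (\<Sum>i<k. real (t i) * real (n i) * ((real (r i) - 1) * (real (r i) + 1) / real (r i)))
      / (real d * (2 * real g2 - 2) + (\<Sum>i<k. real (t i) * real (n i) * (real (r i) - 1)))"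
proof -
  define E where "E = euler_curve g1"
  have "E < 0" using assms by (simp add: E_def euler_curve_def)
  define A where "A = (\<Sum>i<k. real (t i) * real (n i) * ((real (r i) - 1) * (real (r i) + 1) / real (r i)))"
  define B where "B = (\<Sum>i<k. real (t i) * real (n i) * (real (r i) - 1))"
  have "abstract_slope g1 g2 k d t n r = 2 + (- (A * E)) / (real d * (E * (2 - 2 * real g2)) - B * E)"
    unfolding abstract_slope_def E_def[symmetric] A_def B_def
    by (simp add: euler_curve_def sum_distrib_right)
  also have "\<dots> = 2 + ((-E) * A) / ((-E) * (real d * (2 * real g2 - 2) + B))"
    by (simp add: algebra_simps)
  also have "\<dots> = 2 + A / (real d * (2 * real g2 - 2) + B)"
    using \<open>E < 0\<close> by simp
  finally show ?thesis unfolding A_def B_def .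
qed

lemma component_weight_bounds:
  fixes T R :: real
  assumes "0 < T" and "1 < R"
  shows "0 < T * (R - 1)"
    and "T * (R - 1) \<le> T * ((R - 1) * (R + 1) / R)"
    and "T * ((R - 1) * (R + 1) / R) - T * (R - 1) \<le> T * R / 4"
proof -
  have excess: "T * ((R - 1) * (R + 1) / R) - T * (R - 1) = T * ((R - 1) / R)"
    using assms by (simp add: field_simps)
  show "0 < T * (R - 1)" using assms by simp
  show "T * (R - 1) \<le> T * ((R - 1) * (R + 1) / R)"
    using excess assms by (simp add: algebra_simps)
  have "(R - 1) / R \<le> R / 4"
    using assms(2) zero_le_square[of "R - 2"] by (simp add: field_simps algebra_simps)
  then have "T * ((R - 1) / R) \<le> T * (R / 4)"
    using assms(1) by (intro mult_left_mono) auto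
  then show "T * ((R - 1) * (R + 1) / R) - T * (R - 1) \<le> T * R / 4"
    unfolding excess by simp
qed

lemma mediant_less:
  fixes A D a b :: "'a :: linordered_field"
  assumes "A < D" and "0 < b" and "b \<le> a" and "0 < D"
  shows "A / D < (A + a) / (D + b)"
proof -
  have "A * b < D * b" using assms(1,2) by simp
  also have "\<dots> \<le> D * a" using assms(3,4) by simp
  finally have "A * (D + b) < (A + a) * D" by (simp add: algebra_simps)
  then show ?thesis using assms(2,4) by (simp add: divide_less_eq less_divide_eq mult.commute)
qed

theorem lemma5p7:
  fixes g1 g2 m d :: nat and t n r :: "nat \<Rightarrow> nat"
  assumes "g1 \<ge> 2" and "g2 \<ge> 2"
    and "sga_config g1 g2 (m + 1) d t n r"
    and "real m \<le> 4 * (real g2 - 1)"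
  shows "abstract_slope g1 g2 m d t n r < abstract_slope g1 g2 (m + 1) d t n r"
proof -
  define a where "a i = real (t i) * real (n i) * ((real (r i) - 1) * (real (r i) + 1) / real (r i))" for i
  define b where "b i = real (t i) * real (n i) * (real (r i) - 1)" for i
  define G where "G = real d * (2 * real g2 - 2)"
  have "d > 0" and component: "\<And>i. i < m + 1 \<Longrightarrow> t i > 0 \<and> n i > 0 \<and> r i \<ge> 2 \<and> d = t i * n i * r i"
    using assms(3) unfolding sga_config_def by auto
  have bounds: "0 < b i" "b i \<le> a i" "a i - b i \<le> real d / 4" if "i < m + 1" for i
    using component[OF that] component_weight_bounds[of "real (t i) * real (n i)" "real (r i)"]
    unfolding a_def b_def by auto
  have "0 < G" unfolding G_def using \<open>d > 0\<close> assms(2) by simp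
  have "(\<Sum>i<m. a i) - (\<Sum>i<m. b i) \<le> real m * (real d / 4)"
    using sum_mono[of "{..<m}" "\<lambda>i. a i - b i" "\<lambda>_. real d / 4"] bounds(3)
    by (simp add: sum_subtractf)
  also have "\<dots> \<le> (real g2 - 1) * real d"
    using mult_right_mono[OF assms(4), of "real d"] by (simp add: algebra_simps)
  also have "\<dots> < G" unfolding G_def using \<open>d > 0\<close> assms(2) by simp
  finally have "(\<Sum>i<m. a i) < G + (\<Sum>i<m. b i)" by simp
  moreover have "0 \<le> (\<Sum>i<m. b i)"
    using bounds(1) by (intro sum_nonneg) (simp add: less_imp_le)
  with \<open>0 < G\<close> have "0 < G + (\<Sum>i<m. b i)" by simp
  ultimately have "(\<Sum>i<m. a i) / (G + (\<Sum>i<m. b i)) < ((\<Sum>i<m. a i) + a m) / (G + (\<Sum>i<m. b i) + b m)"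
    using bounds(1,2)[of m] by (intro mediant_less) auto
  then show ?thesis
    unfolding abstract_slope_eq[OF assms(1)] a_def[symmetric] b_def[symmetric] G_def[symmetric]
    by (simp add: add.assoc)
qed

end
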